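(* Let $\mathbb{K}$ be a totally ordered field which is Cantor complete but not algebraically saturated. Then (i) $\mathbb{K}$ has a strictly increasing unbounded sequence; (ii) $\mathbb{K}$ is sequentially complete.
   Context: Cantor complete: every countable family of closed bounded intervals in $\mathbb{K}$ with the finite intersection property has non-empty intersection. Algebraically saturated: every countable family of open intervals in $\mathbb{K}$ with the finite intersection property has non-empty intersection. Sequentially complete: every Cauchy sequence converges in the order topology, where $(a_n)$ is Cauchy if for every $\epsilon\in\mathbb{K}$, $\epsilon>0$, there is $N$ with $|a_n-a_m|<\epsilon$ for $n,m\ge N$. *)

theory Defs
  imports Main
begin

definition cantor_complete :: "'a::linordered_field itself \<Rightarrow> bool" where
  "cantor_complete _ \<longleftrightarrow>
     (\<forall>(a::nat \<Rightarrow> 'a) b.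
        (\<forall>F. finite F \<longrightarrow> (\<Inter>i\<in>F. {a i..b i}) \<noteq> {}) \<longrightarrow>
        (\<Inter>i. {a i..b i}) \<noteq> {})"

definition algebraically_saturated :: "'a::linordered_field itself \<Rightarrow> bool" where
  "algebraically_saturated _ \<longleftrightarrow>
     (\<forall>(a::nat \<Rightarrow> 'a) b.
        (\<forall>F. finite F \<longrightarrow> (\<Inter>i\<in>F. {a i<..<b i}) \<noteq> {}) \<longrightarrow>
        (\<Inter>i. {a i<..<b i}) \<noteq> {})"

definition ord_cauchy :: "(nat \<Rightarrow> 'a::linordered_field) \<Rightarrow> bool" where
  "ord_cauchy x \<longleftrightarrow>
     (\<forall>\<epsilon>>0. \<exists>N. \<forall>n\<ge>N. \<forall>m\<ge>N. \<bar>x n - x m\<bar> < \<epsilon>)"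

definition ord_converges_to :: "(nat \<Rightarrow> 'a::linordered_field) \<Rightarrow> 'a \<Rightarrow> bool" where
  "ord_converges_to x L \<longleftrightarrow> (\<forall>\<epsilon>>0. \<exists>N. \<forall>n\<ge>N. \<bar>x n - L\<bar> < \<epsilon>)"

definition sequentially_complete :: "'a::linordered_field itself \<Rightarrow> bool" where
  "sequentially_complete _ \<longleftrightarrow>
     (\<forall>x::nat \<Rightarrow> 'a. ord_cauchy x \<longrightarrow> (\<exists>L. ord_converges_to x L))"

end

theory Submission
  imports Defs
begin

text \<open>
  The key notion is a \emph{null sequence of positives}: a sequence
  of positive elements that eventually lies below every positive element, i.e.
  the positive cone has countable coinitiality.

  If \<open>K\<close> is Cantor complete but a countable family of open intervals
  \<open>(a i, b i)\<close> with the finite intersection property has empty intersection,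
  then the closed intervals \<open>[a i, b i]\<close> share a point \<open>c\<close>, which must be an
  endpoint \<open>a k\<close> or \<open>b k\<close>.  If \<open>c = a k\<close>, nothing lies strictly between \<open>c\<close> and
  all \<open>b j\<close>, so \<open>b j - c\<close> is a null sequence of positives; the case \<open>c = b k\<close> is
  the mirror image under negation.

  From such a sequence \<open>d\<close> both claims follow in any ordered field: the
  reciprocals \<open>1 / d j\<close> are unbounded, and any unbounded sequence can be made
  strictly increasing; and for a Cauchy sequence \<open>s\<close> the closed intervals of
  radius \<open>d n\<close> around the tails of \<open>s\<close> have the finite intersection property,
  so by Cantor completeness they meet in a point, which is the limit of \<open>s\<close>.
\<close>

definition null_positive_seq :: "(nat \<Rightarrow> 'a::linordered_field) \<Rightarrow> bool" where
  "null_positive_seq d \<longleftrightarrow> (\<forall>j. 0 < d j) \<and> (\<forall>\<epsilon>>0. \<exists>j. d j \<le> \<epsilon>)"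

lemma null_positive_seq_from_gap:
  fixes c :: "'a::linordered_field" and b :: "nat \<Rightarrow> 'a"
  assumes below: "\<And>j. c < b j"
    and no_between: "\<not> (\<exists>x>c. \<forall>j. x < b j)"
  shows "null_positive_seq (\<lambda>j. b j - c)"
  unfolding null_positive_seq_def
proof (intro conjI allI impI)
  fix j show "0 < b j - c" using below[of j] by simp
next
  fix \<epsilon> :: 'a assume "0 < \<epsilon>"
  then have "\<not> (\<forall>j. c + \<epsilon> < b j)" using no_between by force
  then show "\<exists>j. b j - c \<le> \<epsilon>" by (auto simp: not_less algebra_simps)
qed

lemma null_positive_seq_from_gap_below:
  fixes c :: "'a::linordered_field" and a :: "nat \<Rightarrow> 'a"
  assumes above: "\<And>j. a j < c"
    and no_between: "\<not> (\<exists>x<c. \<forall>j. a j < x)"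
  shows "null_positive_seq (\<lambda>j. c - a j)"
proof -
  have "\<not> (\<exists>x>-c. \<forall>j. x < - a j)"
  proof
    assume "\<exists>x>-c. \<forall>j. x < - a j"
    then obtain x where "x > -c" "\<forall>j. x < - a j" by blast
    then have "-x < c" "\<forall>j. a j < -x" by (auto simp: less_minus_iff minus_less_iff)
    with no_between show False by blast
  qed
  with above have "null_positive_seq (\<lambda>j. - a j - - c)"
    by (intro null_positive_seq_from_gap) auto
  then show ?thesis by simp
qed

lemma fip_open_endpoints_ordered:
  fixes a b :: "nat \<Rightarrow> 'a::linorder"
  assumes "\<forall>F. finite F \<longrightarrow> (\<Inter>i\<in>F. {a i<..<b i}) \<noteq> {}"
  shows "a i < b j"
proof -
  have "(\<Inter>l\<in>{i,j}. {a l<..<b l}) \<noteq> {}"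
    using assms[rule_format, of "{i,j}"] by simp
  then obtain x where "x \<in> (\<Inter>l\<in>{i,j}. {a l<..<b l})" by blast
  then have "a i < x" "x < b j" by auto
  then show ?thesis by simp
qed

text \<open>The witness of non-saturation has a Cantor point \<open>c\<close> in its closed
  intervals; \<open>c\<close> is an endpoint, and the gaps on its open side are null.\<close>

lemma null_positive_seq_exists:
  assumes cc: "cantor_complete TYPE('a::linordered_field)"
    and nas: "\<not> algebraically_saturated TYPE('a)"
  shows "\<exists>d::nat \<Rightarrow> 'a. null_positive_seq d"
proof -
  from nas obtain a b :: "nat \<Rightarrow> 'a" where
    fip: "\<forall>F. finite F \<longrightarrow> (\<Inter>i\<in>F. {a i<..<b i}) \<noteq> {}"
    and empty: "(\<Inter>i. {a i<..<b i}) = {}"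
    unfolding algebraically_saturated_def by blast
  have ab: "a i < b j" for i j
    using fip by (rule fip_open_endpoints_ordered)
  have "(\<Inter>i\<in>F. {a i..b i}) \<noteq> {}" if "finite F" for F
  proof -
    from fip that obtain x where "x \<in> (\<Inter>i\<in>F. {a i<..<b i})" by blast
    then have "x \<in> (\<Inter>i\<in>F. {a i..b i})" by auto
    then show ?thesis by blast
  qed
  with cc obtain c where "c \<in> (\<Inter>i. {a i..b i})"
    unfolding cantor_complete_def by blast
  then have c: "a i \<le> c" "c \<le> b i" for i by auto
  have no_point: "\<not> (\<forall>i. a i < x \<and> x < b i)" for x
    using empty by (auto simp: set_eq_iff)
  then obtain k where "c = a k \<or> c = b k"
    using c by (metis order.not_eq_order_implies_strict)
  then show ?thesis
  proof
    assume "c = a k"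
    then have "c < b j" for j using ab[of k j] by simp
    moreover have "\<not> (\<exists>x>c. \<forall>j. x < b j)"
      using no_point c(1) by (meson order_le_less_trans)
    ultimately show ?thesis by (blast intro: null_positive_seq_from_gap)
  next
    assume "c = b k"
    then have "a j < c" for j using ab[of j k] by simp
    moreover have "\<not> (\<exists>x<c. \<forall>j. a j < x)"
      using no_point c(2) by (meson order_less_le_trans)
    ultimately show ?thesis by (blast intro: null_positive_seq_from_gap_below)
  qed
qed

lemma null_positive_seq_inverse_unbounded:
  fixes d :: "nat \<Rightarrow> 'a::linordered_field"
  assumes "null_positive_seq d"
  shows "\<exists>j. M < 1 / d j"
proof -
  have pos: "0 < 1 / (\<bar>M\<bar> + 1)" by (simp add: add_pos_nonneg)
  with assms obtain j where dj: "d j \<le> 1 / (\<bar>M\<bar> + 1)" and "0 < d j"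
    unfolding null_positive_seq_def by blast
  then have "1 / (1 / (\<bar>M\<bar> + 1)) \<le> 1 / d j"
    using pos by (intro divide_left_mono) auto
  then have "\<bar>M\<bar> + 1 \<le> 1 / d j" by simp
  then show ?thesis by (intro exI[of _ j]) linarith
qed

text \<open>Any sequence unbounded above dominates a strictly increasing one:
  take the running maximum, forced up by at least \<open>1\<close> at each step.\<close>

lemma strict_mono_unbounded_from_unbounded:
  fixes y :: "nat \<Rightarrow> 'a::linordered_idom"
  assumes unbounded: "\<And>M. \<exists>j. M < y j"
  shows "\<exists>x::nat \<Rightarrow> 'a. strict_mono x \<and> (\<forall>M. \<exists>n. M < x n)"
proof -
  define x where "x = rec_nat (y 0) (\<lambda>n xn. max (xn + 1) (y (Suc n)))"
  have x0: "x 0 = y 0" and xSuc: "x (Suc n) = max (x n + 1) (y (Suc n))" for n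
    by (simp_all add: x_def)
  have "strict_mono x"
    by (rule strict_mono_Suc_iff[THEN iffD2]) (auto simp: xSuc)
  moreover have dominates: "y n \<le> x n" for n
    by (cases n) (auto simp: x0 xSuc)
  then have "\<forall>M. \<exists>n. M < x n"
    using unbounded by (meson order_less_le_trans)
  ultimately show ?thesis by blast
qed

text \<open>For a Cauchy sequence \<open>s\<close> with moduli \<open>N n\<close> for the tolerances \<open>e n\<close>, the
  closed intervals of radius \<open>e n\<close> around \<open>s (N n)\<close> have the finite
  intersection property: a term far enough out lies in all of finitely many.\<close>

lemma cauchy_intervals_fip:
  fixes s e :: "nat \<Rightarrow> 'a::linordered_field"
  assumes N: "\<And>n p q. N n \<le> p \<Longrightarrow> N n \<le> q \<Longrightarrow> \<bar>s p - s q\<bar> < e n"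
    and "finite F"
  shows "(\<Inter>i\<in>F. {s (N i) - e i..s (N i) + e i}) \<noteq> {}"
proof -
  define M where "M = Max (N ` F)"
  have "s M \<in> {s (N i) - e i..s (N i) + e i}" if "i \<in> F" for i
  proof -
    have "N i \<le> M" using \<open>finite F\<close> that by (simp add: M_def)
    then have "\<bar>s M - s (N i)\<bar> < e i" using N by blast
    then show ?thesis by (auto simp: abs_less_iff)
  qed
  then show ?thesis by blast
qed

text \<open>With tolerances given by a null sequence of positives, Cantor completeness
  provides a common point of those intervals, and it is the limit.\<close>

lemma cantor_complete_sequentially_complete:
  fixes d :: "nat \<Rightarrow> 'a::linordered_field"
  assumes cc: "cantor_complete TYPE('a)"
    and d: "null_positive_seq d"
  shows "sequentially_complete TYPE('a)"
  unfolding sequentially_complete_def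
proof (intro allI impI)
  fix s :: "nat \<Rightarrow> 'a" assume "ord_cauchy s"
  then have "\<forall>n. \<exists>N. \<forall>p\<ge>N. \<forall>q\<ge>N. \<bar>s p - s q\<bar> < d n"
    using d unfolding ord_cauchy_def null_positive_seq_def by blast
  then obtain N where N: "\<And>n p q. N n \<le> p \<Longrightarrow> N n \<le> q \<Longrightarrow> \<bar>s p - s q\<bar> < d n"
    by metis
  then have "\<forall>F. finite F \<longrightarrow> (\<Inter>i\<in>F. {s (N i) - d i..s (N i) + d i}) \<noteq> {}"
    using cauchy_intervals_fip by blast
  then obtain L where "L \<in> (\<Inter>i. {s (N i) - d i..s (N i) + d i})"
    using cc[unfolded cantor_complete_def, rule_format,
        of "\<lambda>i. s (N i) - d i" "\<lambda>i. s (N i) + d i"] by blast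
  then have L: "s (N i) - d i \<le> L" "L \<le> s (N i) + d i" for i by auto
  have "\<exists>M. \<forall>p\<ge>M. \<bar>s p - L\<bar> < \<epsilon>" if "0 < \<epsilon>" for \<epsilon>
  proof -
    from d that obtain n where dn: "d n \<le> \<epsilon> / 2"
      unfolding null_positive_seq_def by (meson half_gt_zero)
    have "\<bar>s p - L\<bar> < \<epsilon>" if "N n \<le> p" for p
      using N[OF that order.refl] L[of n] dn by (auto simp: abs_less_iff)
    then show ?thesis by blast
  qed
  then show "\<exists>L. ord_converges_to s L"
    unfolding ord_converges_to_def by blast
qed

theorem mainTheorem18:
  assumes "cantor_complete TYPE('a::linordered_field)"
    and "\<not> algebraically_saturated TYPE('a)"
  shows "(\<exists>x::nat \<Rightarrow> 'a. strict_mono x \<and> (\<forall>M. \<exists>n. M < x n))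
         \<and> sequentially_complete TYPE('a)"
proof -
  obtain d :: "nat \<Rightarrow> 'a" where d: "null_positive_seq d"
    using null_positive_seq_exists[OF assms] by blast
  have "\<exists>x::nat \<Rightarrow> 'a. strict_mono x \<and> (\<forall>M. \<exists>n. M < x n)"
    by (rule strict_mono_unbounded_from_unbounded[OF null_positive_seq_inverse_unbounded[OF d]])
  moreover have "sequentially_complete TYPE('a)"
    by (rule cantor_complete_sequentially_complete[OF assms(1) d])
  ultimately show ?thesis ..
qed

end
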